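(* Let $\Omega$ be a topological signature and $X$ a topological space such that $X$ and every $\Omega_n$ are 0-dimensional spaces. Then the topological algebra $T_\Omega(X)$ is residually finite. Moreover, the unique continuous homomorphism $T_\Omega(X)\to\overline{\Omega}_X\mathcal{S}t_\Omega$ extending the natural generating mapping $X\to\overline{\Omega}_X\mathcal{S}t_\Omega$ is injective and is a homeomorphism of $T_\Omega(X)$ onto the subalgebra of $\overline{\Omega}_X\mathcal{S}t_\Omega$ (algebraically) generated by the image of $X$.
   Context: A space is 0-dimensional if it is $T_1$ and its clopen subsets form a basis. $T_\Omega(X)$ is the term algebra (absolutely free $\Omega$-algebra) on $X$, whose elements are finite ordered trees with leaves labeled in $X\uplus\Omega_0$ and nodes with $k$ children labeled in $\Omega_k$; it is topologized as the topological sum, over all tree shapes, of the product of the label spaces of the nodes (a net converges to $t$ iff eventually it has the shape of $t$ and the labels at each node converge). It is a topological $\Omega$-algebra, and $X$ embeds as single-node trees. A topological algebra is residually finite if any two distinct elements are separated by a continuous homomorphism into a finite discrete topological $\Omega$-algebra. A Stone topological algebra is a topological $\Omega$-algebra (continuous evaluation maps $\Omega_n\times A^n\to A$) whose space is compact Hausdorff 0-dimensional; $\mathcal{S}t_\Omega$ is the class of all Stone topological $\Omega$-algebras. $\overline{\Omega}_X\mathcal{S}t_\Omega$ is the free Stone topological algebra over $X$: a Stone topological algebra with a continuous map $\iota:X\to\overline{\Omega}_X\mathcal{S}t_\Omega$ whose image generates a dense subalgebra, such that every continuous map from $X$ to a Stone topological $\Omega$-algebra $T$ extends uniquely as $\hat\varphi\circ\iota$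 with $\hat\varphi$ a continuous homomorphism. *)

theory Defs
  imports "HOL-Analysis.Analysis"
begin

text \<open>A topological signature is given as a family Om of topological spaces
  indexed by arity: the operation symbols of arity n are the points of
  topspace (Om n).\<close>

definition zero_dimensional :: "'a topology \<Rightarrow> bool" where
  "zero_dimensional T \<longleftrightarrow> t1_space T \<and>
     (\<forall>U x. openin T U \<and> x \<in> U \<longrightarrow>
        (\<exists>C. openin T C \<and> closedin T C \<and> x \<in> C \<and> C \<subseteq> U))"

definition topalg :: "(nat \<Rightarrow> 'o topology) \<Rightarrow> 'a topology \<Rightarrow> ('o \<Rightarrow> 'a list \<Rightarrow> 'a) \<Rightarrow> bool" where
  "topalg Om TA opA \<longleftrightarrow>
     (\<forall>n. continuous_map (prod_topology (Om n) (product_topology (\<lambda>_. TA) {..<n})) TA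
            (\<lambda>(f, g). opA f (map g [0..<n])))"

definition is_hom :: "(nat \<Rightarrow> 'o topology) \<Rightarrow> 'a topology \<Rightarrow> ('o \<Rightarrow> 'a list \<Rightarrow> 'a)
    \<Rightarrow> ('o \<Rightarrow> 'b list \<Rightarrow> 'b) \<Rightarrow> ('a \<Rightarrow> 'b) \<Rightarrow> bool" where
  "is_hom Om TA opA opB h \<longleftrightarrow>
     (\<forall>n f as. f \<in> topspace (Om n) \<and> length as = n \<and> set as \<subseteq> topspace TA \<longrightarrow>
        h (opA f as) = opB f (map h as))"

definition cont_hom :: "(nat \<Rightarrow> 'o topology) \<Rightarrow> 'a topology \<Rightarrow> ('o \<Rightarrow> 'a list \<Rightarrow> 'a)
    \<Rightarrow> 'b topology \<Rightarrow> ('o \<Rightarrow> 'b list \<Rightarrow> 'b) \<Rightarrow> ('a \<Rightarrow> 'b) \<Rightarrow> bool" where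
  "cont_hom Om TA opA TB opB h \<longleftrightarrow> continuous_map TA TB h \<and> is_hom Om TA opA opB h"

inductive_set gen_sub :: "(nat \<Rightarrow> 'o topology) \<Rightarrow> ('o \<Rightarrow> 'a list \<Rightarrow> 'a) \<Rightarrow> 'a set \<Rightarrow> 'a set"
  for Om opA S where
  gen_base: "x \<in> S \<Longrightarrow> x \<in> gen_sub Om opA S"
| gen_op: "f \<in> topspace (Om (length as)) \<Longrightarrow> \<forall>a\<in>set as. a \<in> gen_sub Om opA S
            \<Longrightarrow> opA f as \<in> gen_sub Om opA S"

definition finite_discrete_alg :: "(nat \<Rightarrow> 'o topology) \<Rightarrow> 'a set \<Rightarrow> ('o \<Rightarrow> 'a list \<Rightarrow> 'a) \<Rightarrow> bool" where
  "finite_discrete_alg Om A opA \<longleftrightarrow> finite A \<and> topalg Om (discrete_topology A) opA"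

text \<open>Residual finiteness; finite targets are taken with carrier in nat
  (every finite algebra is isomorphic to one of these).\<close>

definition residually_finite :: "(nat \<Rightarrow> 'o topology) \<Rightarrow> 'a topology \<Rightarrow> ('o \<Rightarrow> 'a list \<Rightarrow> 'a) \<Rightarrow> bool" where
  "residually_finite Om TA opA \<longleftrightarrow>
     (\<forall>a\<in>topspace TA. \<forall>b\<in>topspace TA. a \<noteq> b \<longrightarrow>
        (\<exists>(B :: nat set) opB h. finite_discrete_alg Om B opB \<and>
             cont_hom Om TA opA (discrete_topology B) opB h \<and> h a \<noteq> h b))"

definition stone_alg :: "(nat \<Rightarrow> 'o topology) \<Rightarrow> 'a topology \<Rightarrow> ('o \<Rightarrow> 'a list \<Rightarrow> 'a) \<Rightarrow> bool" where
  "stone_alg Om TA opA \<longleftrightarrow> topalg Om TA opA \<and> compact_space TA \<and> Hausdorff_space TA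
      \<and> zero_dimensional TA"

text \<open>Free Stone topological algebra over the space TX, with universal
  property with respect to all Stone topological algebras whose carrier lies
  in the type 'u (HOL cannot quantify over all types inside a formula).
  Uniqueness is uniqueness on the carrier.\<close>

definition free_stone_alg_wrt :: "'u itself \<Rightarrow> (nat \<Rightarrow> 'o topology) \<Rightarrow> 'x topology
    \<Rightarrow> 'f topology \<Rightarrow> ('o \<Rightarrow> 'f list \<Rightarrow> 'f) \<Rightarrow> ('x \<Rightarrow> 'f) \<Rightarrow> bool" where
  "free_stone_alg_wrt (_ :: 'u itself) Om TX TF opF \<iota> \<longleftrightarrow>
     stone_alg Om TF opF \<and> continuous_map TX TF \<iota> \<and>
     TF closure_of (gen_sub Om opF (\<iota> ` topspace TX)) = topspace TF \<and>
     (\<forall>(TT :: 'u topology) opT \<phi>. stone_alg Om TT opT \<and> continuous_map TX TT \<phi> \<longrightarrow>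
        (\<exists>h. cont_hom Om TF opF TT opT h \<and> (\<forall>x\<in>topspace TX. h (\<iota> x) = \<phi> x) \<and>
           (\<forall>h'. cont_hom Om TF opF TT opT h' \<and> (\<forall>x\<in>topspace TX. h' (\<iota> x) = \<phi> x) \<longrightarrow>
                 (\<forall>y\<in>topspace TF. h' y = h y))))"

datatype ('x, 'o) trm = Var 'x | App 'o "('x, 'o) trm list"

inductive_set trms :: "(nat \<Rightarrow> 'o topology) \<Rightarrow> 'x topology \<Rightarrow> ('x, 'o) trm set"
  for Om TX where
  trms_Var: "x \<in> topspace TX \<Longrightarrow> Var x \<in> trms Om TX"
| trms_App: "f \<in> topspace (Om (length ts)) \<Longrightarrow> \<forall>s\<in>set ts. s \<in> trms Om TX \<Longrightarrow> App f ts \<in> trms Om TX"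

text \<open>Patterns: a tree shape with a set at every node; a basic open set of
  the term topology is the set of terms of that shape whose labels lie in the
  given open sets.\<close>

datatype ('x, 'o) pat = PVar "'x set" | PApp "'o set" "('x, 'o) pat list"

fun matches :: "('x, 'o) pat \<Rightarrow> ('x, 'o) trm \<Rightarrow> bool" where
  "matches (PVar A) (Var x) \<longleftrightarrow> x \<in> A"
| "matches (PApp B ps) (App f ts) \<longleftrightarrow> f \<in> B \<and> list_all2 matches ps ts"
| "matches _ _ \<longleftrightarrow> False"

fun open_pat :: "(nat \<Rightarrow> 'o topology) \<Rightarrow> 'x topology \<Rightarrow> ('x, 'o) pat \<Rightarrow> bool" where
  "open_pat Om TX (PVar A) \<longleftrightarrow> openin TX A"
| "open_pat Om TX (PApp B ps) \<longleftrightarrow> openin (Om (length ps)) B \<and> (\<forall>p\<in>set ps. open_pat Om TX p)"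

definition trm_topology :: "(nat \<Rightarrow> 'o topology) \<Rightarrow> 'x topology \<Rightarrow> ('x, 'o) trm topology" where
  "trm_topology Om TX = topology (\<lambda>U. U \<subseteq> trms Om TX \<and>
     (\<forall>t\<in>U. \<exists>p. open_pat Om TX p \<and> matches p t \<and> {s \<in> trms Om TX. matches p s} \<subseteq> U))"

end

theory Submission
  imports Defs
begin

text \<open>
  The basic open sets of the term algebra are described by open patterns: a tree shape with an
  open set of labels at every node. When the generators and the operation symbols form
  0-dimensional spaces, every open pattern around a term can be shrunk to a clopen one, say q.
  The finitely many subpatterns Q of q give a finite discrete algebra on the subsets of Q, and
  sending a term to the set of patterns of Q that it matches is a continuous homomorphism whose
  fibre through the term lies inside the pattern. Since the term topology is T1, these
  homomorphisms separate points, which is residual finiteness. Finite discrete algebras are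
  Stone algebras, so each of them factors through the free Stone algebra; hence every open set
  of terms is the preimage of an open set of the free Stone algebra, i.e. the canonical
  homomorphism is an embedding, and its image is the subalgebra generated by the generators.
\<close>

lemma trms_Var_iff [simp]: "Var x \<in> trms Om TX \<longleftrightarrow> x \<in> topspace TX"
  by (auto elim: trms.cases intro: trms.intros)

lemma trms_App_iff [simp]:
  "App f ts \<in> trms Om TX \<longleftrightarrow> f \<in> topspace (Om (length ts)) \<and> (\<forall>s\<in>set ts. s \<in> trms Om TX)"
  by (auto elim: trms.cases intro: trms.intros)

lemma matches_PVar_iff: "matches (PVar A) s \<longleftrightarrow> (\<exists>x. s = Var x \<and> x \<in> A)"
  by (cases s) auto

lemma matches_PApp_iff:
  "matches (PApp B ps) s \<longleftrightarrow> (\<exists>g ss. s = App g ss \<and> g \<in> B \<and> list_all2 matches ps ss)"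
  by (cases s) auto

lemma open_pat_Int:
  assumes "open_pat Om TX p" "open_pat Om TX q" "matches p t" "matches q t"
  shows "\<exists>r. open_pat Om TX r \<and> matches r t \<and> (\<forall>s. matches r s \<longrightarrow> matches p s \<and> matches q s)"
  using assms
proof (induction t arbitrary: p q)
  case (Var x)
  then obtain A A' where "p = PVar A" "q = PVar A'"
    by (cases p; cases q) auto
  with Var.prems show ?case
    by (intro exI[of _ "PVar (A \<inter> A')"]) (auto simp: matches_PVar_iff)
next
  case (App f ts)
  then obtain B B' ps qs where pq: "p = PApp B ps" "q = PApp B' qs"
    by (cases p; cases q) auto
  have len: "length ps = length ts" "length qs = length ts"
    using App.prems pq by (auto dest: list_all2_lengthD)
  have "\<forall>i<length ts. \<exists>r. open_pat Om TX r \<and> matches r (ts!i) \<and>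
      (\<forall>s. matches r s \<longrightarrow> matches (ps!i) s \<and> matches (qs!i) s)"
    using App.prems pq len by (auto intro!: App.IH simp: list_all2_conv_all_nth)
  then obtain rs where rs: "length rs = length ts"
    "\<forall>i<length ts. open_pat Om TX (rs!i) \<and> matches (rs!i) (ts!i) \<and>
       (\<forall>s. matches (rs!i) s \<longrightarrow> matches (ps!i) s \<and> matches (qs!i) s)"
    unfolding Skolem_list_nth by blast
  show ?case
    using App.prems pq rs len
    by (intro exI[of _ "PApp (B \<inter> B') rs"])
       (auto simp: in_set_conv_nth list_all2_conv_all_nth matches_PApp_iff)
qed

lemma istopology_trm:
  "istopology (\<lambda>U. U \<subseteq> trms Om TX \<and>
     (\<forall>t\<in>U. \<exists>p. open_pat Om TX p \<and> matches p t \<and> {s \<in> trms Om TX. matches p s} \<subseteq> U))"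
  unfolding istopology_def
proof (intro conjI allI impI ballI)
  fix S T t
  assume S: "S \<subseteq> trms Om TX \<and> (\<forall>t\<in>S. \<exists>p. open_pat Om TX p \<and> matches p t \<and> {s \<in> trms Om TX. matches p s} \<subseteq> S)"
    and T: "T \<subseteq> trms Om TX \<and> (\<forall>t\<in>T. \<exists>p. open_pat Om TX p \<and> matches p t \<and> {s \<in> trms Om TX. matches p s} \<subseteq> T)"
  then show "S \<inter> T \<subseteq> trms Om TX" by blast
  assume "t \<in> S \<inter> T"
  then obtain p q where "open_pat Om TX p" "matches p t" "{s \<in> trms Om TX. matches p s} \<subseteq> S"
    "open_pat Om TX q" "matches q t" "{s \<in> trms Om TX. matches q s} \<subseteq> T"
    using S T by blast
  with open_pat_Int[of Om TX p q t]
  show "\<exists>r. open_pat Om TX r \<and> matches r t \<and> {s \<in> trms Om TX. matches r s} \<subseteq> S \<inter> T"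
    by blast
next
  fix K t
  assume K: "\<forall>U\<in>K. U \<subseteq> trms Om TX \<and>
     (\<forall>t\<in>U. \<exists>p. open_pat Om TX p \<and> matches p t \<and> {s \<in> trms Om TX. matches p s} \<subseteq> U)"
  then show "\<Union>K \<subseteq> trms Om TX" by blast
  assume "t \<in> \<Union>K"
  then obtain U where "U \<in> K" "t \<in> U" by blast
  with K obtain p where "open_pat Om TX p" "matches p t" "{s \<in> trms Om TX. matches p s} \<subseteq> U"
    by blast
  with \<open>U \<in> K\<close> show "\<exists>p. open_pat Om TX p \<and> matches p t \<and> {s \<in> trms Om TX. matches p s} \<subseteq> \<Union>K"
    by blast
qed

lemma openin_trm_topology:
  "openin (trm_topology Om TX) U \<longleftrightarrow> U \<subseteq> trms Om TX \<and>
     (\<forall>t\<in>U. \<exists>p. open_pat Om TX p \<and> matches p t \<and> {s \<in> trms Om TX. matches p s} \<subseteq> U)"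
  unfolding trm_topology_def using istopology_trm[of Om TX] by (simp add: topology_inverse')

lemma openin_trm_topology_matching:
  "open_pat Om TX p \<Longrightarrow> openin (trm_topology Om TX) {s \<in> trms Om TX. matches p s}"
  unfolding openin_trm_topology by auto

primrec shape_pat :: "(nat \<Rightarrow> 'o topology) \<Rightarrow> 'x topology \<Rightarrow> ('x, 'o) trm \<Rightarrow> ('x, 'o) pat" where
  "shape_pat Om TX (Var x) = PVar (topspace TX)"
| "shape_pat Om TX (App f ts) = PApp (topspace (Om (length ts))) (map (shape_pat Om TX) ts)"

lemma open_pat_shape_pat: "open_pat Om TX (shape_pat Om TX t)"
  by (induction t) auto

lemma matches_shape_pat: "t \<in> trms Om TX \<Longrightarrow> matches (shape_pat Om TX t) t"
  by (induction t rule: trms.induct) (auto simp: list_all2_conv_all_nth)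

lemma topspace_trm_topology [simp]: "topspace (trm_topology Om TX) = trms Om TX"
proof
  show "topspace (trm_topology Om TX) \<subseteq> trms Om TX"
    by (metis openin_topspace openin_trm_topology)
  show "trms Om TX \<subseteq> topspace (trm_topology Om TX)"
    using openin_subset[OF openin_trm_topology_matching[OF open_pat_shape_pat]] matches_shape_pat
    by blast
qed

lemma open_pat_at_child:
  assumes "App f ts \<in> trms Om TX" "i < length ts" "open_pat Om TX p" "matches p (ts!i)"
  obtains q where "open_pat Om TX q" "matches q (App f ts)"
    "\<And>s. matches q s \<Longrightarrow> \<exists>g ss. s = App g ss \<and> length ss = length ts \<and> matches p (ss!i)"
proof
  let ?q = "PApp (topspace (Om (length ts))) ((map (shape_pat Om TX) ts)[i := p])"
  show "open_pat Om TX ?q"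
    using assms by (auto simp: open_pat_shape_pat dest!: set_update_subset_insert[THEN subsetD])
  show "matches ?q (App f ts)"
    using assms by (auto simp: list_all2_conv_all_nth nth_list_update matches_shape_pat)
  show "\<exists>g ss. s = App g ss \<and> length ss = length ts \<and> matches p (ss!i)" if "matches ?q s" for s
    using that assms(2) by (auto simp: matches_PApp_iff list_all2_conv_all_nth)
qed

fun closed_pat :: "(nat \<Rightarrow> 'o topology) \<Rightarrow> 'x topology \<Rightarrow> ('x, 'o) pat \<Rightarrow> bool" where
  "closed_pat Om TX (PVar A) \<longleftrightarrow> closedin TX A"
| "closed_pat Om TX (PApp B ps) \<longleftrightarrow> closedin (Om (length ps)) B \<and> (\<forall>p\<in>set ps. closed_pat Om TX p)"

lemma shape_pat_App_matches:
  "matches (shape_pat Om TX (App f ts)) s \<Longrightarrow> \<exists>g ss. s = App g ss \<and> length ss = length ts"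
  by (auto simp: matches_PApp_iff dest: list_all2_lengthD)

lemma closed_pat_nonmatching_nbhd_App:
  assumes "App f ts \<in> trms Om TX" "closed_pat Om TX r" "\<not> matches r (App f ts)"
    and children: "\<And>i r. i < length ts \<Longrightarrow> closed_pat Om TX r \<Longrightarrow> \<not> matches r (ts!i) \<Longrightarrow>
      \<exists>p. open_pat Om TX p \<and> matches p (ts!i) \<and> (\<forall>s\<in>trms Om TX. matches p s \<longrightarrow> \<not> matches r s)"
  shows "\<exists>p. open_pat Om TX p \<and> matches p (App f ts) \<and> (\<forall>s\<in>trms Om TX. matches p s \<longrightarrow> \<not> matches r s)"
proof (cases "\<exists>B rs. r = PApp B rs \<and> length rs = length ts")
  case False
  have "\<not> matches r s" if "matches (shape_pat Om TX (App f ts)) s" for s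
    using False shape_pat_App_matches[OF that] by (cases r) (auto simp: list_all2_iff)
  then show ?thesis
    using open_pat_shape_pat matches_shape_pat[OF assms(1)] by blast
next
  case True
  then obtain B rs where r: "r = PApp B rs" and len: "length rs = length ts"
    by blast
  show ?thesis
  proof (cases "f \<in> B")
    case False
    let ?p = "PApp (topspace (Om (length ts)) - B) (map (shape_pat Om TX) ts)"
    have "open_pat Om TX ?p"
      using assms(2) r len by (auto simp: open_pat_shape_pat)
    moreover have "matches ?p (App f ts)"
      using False matches_shape_pat[OF assms(1)] assms(1) by simp
    ultimately show ?thesis
      using r by (intro exI[of _ ?p]) (auto simp: matches_PApp_iff)
  next
    case True
    with assms(3) r len obtain i where i: "i < length ts" "\<not> matches (rs!i) (ts!i)"
      by (auto simp: list_all2_conv_all_nth)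
    moreover have "closed_pat Om TX (rs!i)"
      using i(1) len assms(2) r by auto
    ultimately obtain p where p: "open_pat Om TX p" "matches p (ts!i)"
      "\<forall>s\<in>trms Om TX. matches p s \<longrightarrow> \<not> matches (rs!i) s"
      using children by blast
    obtain q where q: "open_pat Om TX q" "matches q (App f ts)"
      "\<And>s. matches q s \<Longrightarrow> \<exists>g ss. s = App g ss \<and> length ss = length ts \<and> matches p (ss!i)"
      using open_pat_at_child[OF assms(1) i(1) p(1,2)] by blast
    have "\<not> matches r s" if s: "s \<in> trms Om TX" "matches q s" for s
    proof -
      obtain g ss where ss: "s = App g ss" "length ss = length ts" "matches p (ss!i)"
        using q(3)[OF s(2)] by blast
      then have "\<not> matches (rs!i) (ss!i)"
        using s(1) p(3) i(1) by simp
      then show ?thesis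
        using ss i(1) len r by (auto simp: list_all2_conv_all_nth)
    qed
    with q(1,2) show ?thesis
      by blast
  qed
qed

lemma closed_pat_nonmatching_nbhd:
  assumes "s \<in> trms Om TX" "closed_pat Om TX r" "\<not> matches r s"
  shows "\<exists>p. open_pat Om TX p \<and> matches p s \<and> (\<forall>s'\<in>trms Om TX. matches p s' \<longrightarrow> \<not> matches r s')"
  using assms
proof (induction s arbitrary: r rule: trms.induct)
  case (trms_Var x)
  show ?case
  proof (cases r)
    case (PVar A)
    with trms_Var show ?thesis
      by (intro exI[of _ "PVar (topspace TX - A)"]) (auto simp: matches_PVar_iff)
  next
    case (PApp B rs)
    with trms_Var show ?thesis
      by (intro exI[of _ "PVar (topspace TX)"]) (auto simp: matches_PVar_iff)
  qed
next
  case (trms_App f ts)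
  then show ?case
    by (intro closed_pat_nonmatching_nbhd_App) (auto dest: nth_mem)
qed

lemma closedin_trm_topology_matching:
  assumes "closed_pat Om TX r"
  shows "closedin (trm_topology Om TX) {s \<in> trms Om TX. matches r s}"
proof -
  have "openin (trm_topology Om TX) (trms Om TX - {s \<in> trms Om TX. matches r s})"
    unfolding openin_trm_topology using closed_pat_nonmatching_nbhd[OF _ assms] by fastforce
  then show ?thesis
    by (simp add: closedin_def)
qed

primrec point_pat :: "('x, 'o) trm \<Rightarrow> ('x, 'o) pat" where
  "point_pat (Var x) = PVar {x}"
| "point_pat (App f ts) = PApp {f} (map point_pat ts)"

lemma matches_point_pat: "matches (point_pat t) s \<longleftrightarrow> s = t"
proof (induction t arbitrary: s)
  case (Var x)
  then show ?case by (auto simp: matches_PVar_iff)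
next
  case (App f ts)
  then have "list_all2 matches (map point_pat ts) ss \<longleftrightarrow> ss = ts" for ss
    by (auto simp: list_all2_conv_all_nth intro: nth_equalityI)
  then show ?case
    by (auto simp: matches_PApp_iff)
qed

lemma t1_space_trm_topology:
  assumes "t1_space TX" "\<And>n. t1_space (Om n)"
  shows "t1_space (trm_topology Om TX)"
proof -
  have "closed_pat Om TX (point_pat t)" if "t \<in> trms Om TX" for t
    using that assms by (induction t rule: trms.induct) (auto simp: t1_space_closedin_singleton)
  then have "closedin (trm_topology Om TX) {s \<in> trms Om TX. s = t}" if "t \<in> trms Om TX" for t
    using that closedin_trm_topology_matching[of Om TX "point_pat t"] by (simp add: matches_point_pat)
  then show ?thesis
    unfolding t1_space_closedin_singleton by (simp add: Collect_conj_eq)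
qed

lemma zero_dimensional_imp_t1_space: "zero_dimensional X \<Longrightarrow> t1_space X"
  unfolding zero_dimensional_def by blast

lemma clopen_pat_refinement:
  assumes "zero_dimensional TX" "\<And>n. zero_dimensional (Om n)"
  shows "t \<in> trms Om TX \<Longrightarrow> open_pat Om TX p \<Longrightarrow> matches p t \<Longrightarrow>
    \<exists>q. open_pat Om TX q \<and> closed_pat Om TX q \<and> matches q t \<and> (\<forall>s. matches q s \<longrightarrow> matches p s)"
proof (induction t arbitrary: p rule: trms.induct)
  case (trms_Var x)
  then obtain A where p: "p = PVar A" "x \<in> A" "openin TX A"
    by (cases p) auto
  with assms(1) obtain C where "openin TX C" "closedin TX C" "x \<in> C" "C \<subseteq> A"
    unfolding zero_dimensional_def by blast
  with p show ?case
    by (intro exI[of _ "PVar C"]) (auto simp: matches_PVar_iff)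
next
  case (trms_App f ts)
  then obtain B ps where p: "p = PApp B ps" "f \<in> B" "openin (Om (length ps)) B"
    "list_all2 matches ps ts" "\<forall>p\<in>set ps. open_pat Om TX p"
    by (cases p) auto
  have len: "length ps = length ts"
    using p(4) by (rule list_all2_lengthD)
  obtain C where C: "openin (Om (length ts)) C" "closedin (Om (length ts)) C" "f \<in> C" "C \<subseteq> B"
    using assms(2)[of "length ts"] p(2,3) len unfolding zero_dimensional_def by metis
  have "\<forall>i<length ts. \<exists>q. open_pat Om TX q \<and> closed_pat Om TX q \<and> matches q (ts!i) \<and>
      (\<forall>s. matches q s \<longrightarrow> matches (ps!i) s)"
  proof (intro allI impI)
    fix i assume i: "i < length ts"
    then have "ts!i \<in> set ts" "open_pat Om TX (ps!i)" "matches (ps!i) (ts!i)"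
      using p(4,5) len by (auto simp: list_all2_conv_all_nth)
    then show "\<exists>q. open_pat Om TX q \<and> closed_pat Om TX q \<and> matches q (ts!i) \<and>
        (\<forall>s. matches q s \<longrightarrow> matches (ps!i) s)"
      using trms_App.IH by blast
  qed
  then obtain qs where qs: "length qs = length ts"
    "\<forall>i<length ts. open_pat Om TX (qs!i) \<and> closed_pat Om TX (qs!i) \<and> matches (qs!i) (ts!i) \<and>
       (\<forall>s. matches (qs!i) s \<longrightarrow> matches (ps!i) s)"
    unfolding Skolem_list_nth by blast
  have "matches p s" if "matches (PApp C qs) s" for s
    using that qs C p len by (auto simp: matches_PApp_iff list_all2_conv_all_nth)
  moreover have "open_pat Om TX (PApp C qs)" "closed_pat Om TX (PApp C qs)"
    using qs C by (auto simp: in_set_conv_nth)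
  moreover have "matches (PApp C qs) (App f ts)"
    using qs C by (auto simp: list_all2_conv_all_nth)
  ultimately show ?case
    by blast
qed

primrec subpats :: "('x, 'o) pat \<Rightarrow> ('x, 'o) pat set" where
  "subpats (PVar A) = {PVar A}"
| "subpats (PApp B ps) = insert (PApp B ps) (\<Union> (set (map subpats ps)))"

lemma finite_subpats: "finite (subpats q)"
  by (induction q) auto

lemma self_in_subpats: "q \<in> subpats q"
  by (cases q) auto

lemma subpats_child_closed: "PApp B ps \<in> subpats q \<Longrightarrow> p \<in> set ps \<Longrightarrow> p \<in> subpats q"
  by (induction q) (auto intro: self_in_subpats)

lemma open_pat_subpats: "open_pat Om TX q \<Longrightarrow> r \<in> subpats q \<Longrightarrow> open_pat Om TX r"
  by (induction q) auto

lemma closed_pat_subpats: "closed_pat Om TX q \<Longrightarrow> r \<in> subpats q \<Longrightarrow> closed_pat Om TX r"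
  by (induction q) auto

lemma open_nbhd_deciding_clopens:
  assumes "finite \<B>" "\<And>B. B \<in> \<B> \<Longrightarrow> openin X B \<and> closedin X B" "x \<in> topspace X"
  obtains W where "openin X W" "x \<in> W" "\<And>y B. y \<in> W \<Longrightarrow> B \<in> \<B> \<Longrightarrow> y \<in> B \<longleftrightarrow> x \<in> B"
proof
  let ?W = "(\<Inter>B\<in>\<B>. if x \<in> B then B else topspace X - B) \<inter> topspace X"
  show "openin X ?W"
    using assms(1,2) by (intro openin_INT) auto
  show "x \<in> ?W"
    using assms(3) by (intro IntI INT_I) auto
  show "y \<in> B \<longleftrightarrow> x \<in> B" if "y \<in> ?W" "B \<in> \<B>" for y B
    using that by (cases "x \<in> B") auto
qed

lemma continuous_map_discrete_if_locally_constant: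
  assumes "f ` topspace X \<subseteq> A"
    and "\<And>x. x \<in> topspace X \<Longrightarrow> \<exists>U. openin X U \<and> x \<in> U \<and> (\<forall>y\<in>U. f y = f x)"
  shows "continuous_map X (discrete_topology A) f"
  unfolding continuous_map
proof (intro conjI allI impI)
  show "f ` topspace X \<subseteq> topspace (discrete_topology A)"
    using assms(1) by simp
  fix V
  show "openin X {x \<in> topspace X. f x \<in> V}"
  proof (subst openin_subopen, intro ballI)
    fix x assume x: "x \<in> {x \<in> topspace X. f x \<in> V}"
    then obtain U where U: "openin X U" "x \<in> U" "\<forall>y\<in>U. f y = f x"
      using assms(2) by blast
    moreover have "U \<subseteq> {x \<in> topspace X. f x \<in> V}"
      using openin_subset[OF U(1)] U(3) x by auto
    ultimately show "\<exists>T. openin X T \<and> x \<in> T \<and> T \<subseteq> {x \<in> topspace X. f x \<in> V}"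
      by blast
  qed
qed

lemma openin_discrete_product_singleton:
  assumes "finite I" "g \<in> PiE I (\<lambda>_. A)"
  shows "openin (product_topology (\<lambda>_. discrete_topology A) I) {g}"
proof -
  have "{g} = PiE I (\<lambda>i. {g i})"
    using assms(2) by (simp add: PiE_singleton PiE_iff)
  also have "openin (product_topology (\<lambda>_. discrete_topology A) I) \<dots>"
    using assms by (auto simp: openin_PiE_gen PiE_iff)
  finally show ?thesis .
qed

lemma topalg_discrete_if_locally_constant:
  assumes "\<And>f as. f \<in> topspace (Om (length as)) \<Longrightarrow> set as \<subseteq> A \<Longrightarrow> op f as \<in> A"
    and "\<And>n f. f \<in> topspace (Om n) \<Longrightarrow>
      \<exists>W. openin (Om n) W \<and> f \<in> W \<and> (\<forall>f'\<in>W. \<forall>as. length as = n \<longrightarrow> op f' as = op f as)"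
  shows "topalg Om (discrete_topology A) op"
  unfolding topalg_def
proof
  fix n
  let ?P = "prod_topology (Om n) (product_topology (\<lambda>_. discrete_topology A) {..<n})"
  show "continuous_map ?P (discrete_topology A) (\<lambda>(f, g). op f (map g [0..<n]))"
  proof (rule continuous_map_discrete_if_locally_constant)
    show "(\<lambda>(f, g). op f (map g [0..<n])) ` topspace ?P \<subseteq> A"
    proof
      fix y assume "y \<in> (\<lambda>(f, g). op f (map g [0..<n])) ` topspace ?P"
      then obtain f g where "y = op f (map g [0..<n])" "f \<in> topspace (Om n)" "g \<in> PiE {..<n} (\<lambda>_. A)"
        by auto
      then show "y \<in> A"
        using assms(1)[of f "map g [0..<n]"] by (auto simp: PiE_iff atLeast0LessThan)
    qed
    fix x assume "x \<in> topspace ?P"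
    then obtain f g where x: "x = (f, g)" "f \<in> topspace (Om n)" "g \<in> PiE {..<n} (\<lambda>_. A)"
      by auto
    obtain W where W: "openin (Om n) W" "f \<in> W"
      "\<forall>f'\<in>W. \<forall>as. length as = n \<longrightarrow> op f' as = op f as"
      using assms(2)[OF x(2)] by blast
    have "openin ?P (W \<times> {g})"
      using W(1) openin_discrete_product_singleton[OF _ x(3)] by (simp add: openin_prod_Times_iff)
    moreover have "length (map g [0..<n]) = n"
      by simp
    with W(3) have eq: "\<forall>f'\<in>W. op f' (map g [0..<n]) = op f (map g [0..<n])"
      by blast
    ultimately show "\<exists>U. openin ?P U \<and> x \<in> U \<and>
      (\<forall>y\<in>U. (\<lambda>(f, g). op f (map g [0..<n])) y = (\<lambda>(f, g). op f (map g [0..<n])) x)"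
    proof (intro exI[of _ "W \<times> {g}"] conjI ballI)
      show "x \<in> W \<times> {g}"
        using W(2) x(1) by simp
      fix y assume "y \<in> W \<times> {g}"
      then obtain f' where y: "y = (f', g)" "f' \<in> W"
        by blast
      show "(\<lambda>(f, g). op f (map g [0..<n])) y = (\<lambda>(f, g). op f (map g [0..<n])) x"
        unfolding y(1) x(1) prod.case using eq y(2) by blast
    qed
  qed
qed

text \<open>Residual finiteness and the universal property of the free Stone algebra only speak about
  finite algebras with carriers in fixed types (nat and 'u), so algebras built on other carriers
  are transported along an injection.\<close>

definition encode_op :: "'a set \<Rightarrow> ('a \<Rightarrow> 'c) \<Rightarrow> ('o \<Rightarrow> 'a list \<Rightarrow> 'a) \<Rightarrow> 'o \<Rightarrow> 'c list \<Rightarrow> 'c" where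
  "encode_op A e op f xs = e (op f (map (inv_into A e) xs))"

lemma finite_discrete_alg_encoding:
  assumes "finite A" "inj_on e A"
    and "\<And>f as. f \<in> topspace (Om (length as)) \<Longrightarrow> set as \<subseteq> A \<Longrightarrow> op f as \<in> A"
    and "\<And>n f. f \<in> topspace (Om n) \<Longrightarrow>
      \<exists>W. openin (Om n) W \<and> f \<in> W \<and> (\<forall>f'\<in>W. \<forall>as. length as = n \<longrightarrow> op f' as = op f as)"
  shows "finite_discrete_alg Om (e ` A) (encode_op A e op)"
  unfolding finite_discrete_alg_def encode_op_def
proof (intro conjI topalg_discrete_if_locally_constant)
  show "finite (e ` A)"
    using assms(1) by simp
  show "e (op f (map (inv_into A e) xs)) \<in> e ` A"
    if "f \<in> topspace (Om (length xs))" "set xs \<subseteq> e ` A" for f xs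
    using that assms(3)[of f "map (inv_into A e) xs"] by (auto intro: inv_into_into)
  show "\<exists>W. openin (Om n) W \<and> f \<in> W \<and> (\<forall>f'\<in>W. \<forall>xs. length xs = n \<longrightarrow>
      e (op f' (map (inv_into A e) xs)) = e (op f (map (inv_into A e) xs)))"
    if f: "f \<in> topspace (Om n)" for n f
  proof -
    obtain W where W: "openin (Om n) W" "f \<in> W" "\<forall>f'\<in>W. \<forall>as. length as = n \<longrightarrow> op f' as = op f as"
      using assms(4)[OF f] by blast
    have "e (op f' (map (inv_into A e) xs)) = e (op f (map (inv_into A e) xs))"
      if "f' \<in> W" "length xs = n" for f' xs
    proof -
      have "length (map (inv_into A e) xs) = n"
        using that(2) by simp
      with W(3) that(1) have "op f' (map (inv_into A e) xs) = op f (map (inv_into A e) xs)"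
        by blast
      then show ?thesis
        by simp
    qed
    with W(1,2) show ?thesis
      by blast
  qed
qed

lemma cont_hom_encoding:
  assumes "continuous_map T (discrete_topology A) \<phi>" "is_hom Om T opT op \<phi>" "inj_on e A"
  shows "cont_hom Om T opT (discrete_topology (e ` A)) (encode_op A e op) (e \<circ> \<phi>)"
  unfolding cont_hom_def
proof
  show "continuous_map T (discrete_topology (e ` A)) (e \<circ> \<phi>)"
    using assms(1) by (rule continuous_map_compose) simp
  have "\<phi> x \<in> A" if "x \<in> topspace T" for x
    using that continuous_map_image_subset_topspace[OF assms(1)] by auto
  then have inv: "map (inv_into A e) (map (e \<circ> \<phi>) as) = map \<phi> as" if "set as \<subseteq> topspace T" for as
    using that assms(3) by (auto simp: inv_into_f_f)
  show "is_hom Om T opT (encode_op A e op) (e \<circ> \<phi>)"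
    unfolding is_hom_def encode_op_def
  proof (intro allI impI)
    fix n f as assume as: "f \<in> topspace (Om n) \<and> length as = n \<and> set as \<subseteq> topspace T"
    then have "\<phi> (opT f as) = op f (map \<phi> as)"
      using assms(2) unfolding is_hom_def by blast
    with as show "(e \<circ> \<phi>) (opT f as) = e (op f (map (inv_into A e) (map (e \<circ> \<phi>) as)))"
      by (simp only: inv comp_apply)
  qed
qed

definition profile :: "('x, 'o) pat set \<Rightarrow> ('x, 'o) trm \<Rightarrow> ('x, 'o) pat set" where
  "profile Q s = {r \<in> Q. matches r s}"

definition profile_op :: "('x, 'o) pat set \<Rightarrow> 'o \<Rightarrow> ('x, 'o) pat set list \<Rightarrow> ('x, 'o) pat set" where
  "profile_op Q f Ss = {r \<in> Q. \<exists>B ps. r = PApp B ps \<and> f \<in> B \<and> list_all2 (\<in>) ps Ss}"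

lemma profile_App:
  assumes "\<And>B ps p. PApp B ps \<in> Q \<Longrightarrow> p \<in> set ps \<Longrightarrow> p \<in> Q"
  shows "profile Q (App f ts) = profile_op Q f (map (profile Q) ts)"
proof -
  have children: "list_all2 (\<in>) ps (map (profile Q) ts) \<longleftrightarrow> list_all2 matches ps ts"
    if "PApp B ps \<in> Q" for B ps
    using assms[OF that] by (auto simp: list_all2_conv_all_nth profile_def)
  have "r \<in> profile Q (App f ts) \<longleftrightarrow> r \<in> profile_op Q f (map (profile Q) ts)" for r
  proof (cases r)
    case (PVar A)
    then show ?thesis
      by (simp add: profile_def profile_op_def)
  next
    case (PApp B ps)
    show ?thesis
    proof (cases "PApp B ps \<in> Q")
      case True
      then show ?thesis
        using children[OF True] PApp by (simp add: profile_def[of Q "App f ts"] profile_op_def)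
    next
      case False
      then show ?thesis
        using PApp by (simp add: profile_def profile_op_def)
    qed
  qed
  then show ?thesis
    by blast
qed

lemma continuous_map_profile:
  assumes "finite Q" "\<And>r. r \<in> Q \<Longrightarrow> open_pat Om TX r \<and> closed_pat Om TX r"
  shows "continuous_map (trm_topology Om TX) (discrete_topology (Pow Q)) (profile Q)"
proof (rule continuous_map_discrete_if_locally_constant)
  show "profile Q ` topspace (trm_topology Om TX) \<subseteq> Pow Q"
    by (auto simp: profile_def)
  fix s assume s: "s \<in> topspace (trm_topology Om TX)"
  let ?\<B> = "(\<lambda>r. {s \<in> trms Om TX. matches r s}) ` Q"
  have "openin (trm_topology Om TX) M \<and> closedin (trm_topology Om TX) M" if "M \<in> ?\<B>" for M
    using that assms(2) openin_trm_topology_matching closedin_trm_topology_matching by blast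
  then obtain W where W: "openin (trm_topology Om TX) W" "s \<in> W"
    "\<And>y M. y \<in> W \<Longrightarrow> M \<in> ?\<B> \<Longrightarrow> y \<in> M \<longleftrightarrow> s \<in> M"
    using open_nbhd_deciding_clopens[OF finite_imageI[OF assms(1)] _ s] by blast
  have same: "matches r y \<longleftrightarrow> matches r s" if "y \<in> W" "r \<in> Q" for y r
  proof -
    have "y \<in> {s \<in> trms Om TX. matches r s} \<longleftrightarrow> s \<in> {s \<in> trms Om TX. matches r s}"
      using W(3)[OF that(1)] that(2) by blast
    moreover have "y \<in> trms Om TX"
      using openin_subset[OF W(1)] that(1) by auto
    ultimately show ?thesis
      using s by simp
  qed
  have "profile Q y = profile Q s" if "y \<in> W" for y
    unfolding profile_def by (rule Collect_cong) (use same that in blast)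
  with W(1,2) show "\<exists>U. openin (trm_topology Om TX) U \<and> s \<in> U \<and> (\<forall>y\<in>U. profile Q y = profile Q s)"
    by blast
qed

lemma profile_op_locally_constant:
  assumes "finite Q" "\<And>r. r \<in> Q \<Longrightarrow> open_pat Om TX r \<and> closed_pat Om TX r" "f \<in> topspace (Om n)"
  shows "\<exists>W. openin (Om n) W \<and> f \<in> W \<and>
    (\<forall>f'\<in>W. \<forall>Ss. length Ss = n \<longrightarrow> profile_op Q f' Ss = profile_op Q f Ss)"
proof -
  let ?\<B> = "{B. \<exists>ps. PApp B ps \<in> Q \<and> length ps = n}"
  have "?\<B> \<subseteq> (\<lambda>r. case r of PApp B ps \<Rightarrow> B | PVar A \<Rightarrow> {}) ` Q"
    by force
  then have "finite ?\<B>"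
    using assms(1) finite_subset by blast
  moreover have "openin (Om n) B \<and> closedin (Om n) B" if "B \<in> ?\<B>" for B
    using that assms(2) by fastforce
  ultimately obtain W where W: "openin (Om n) W" "f \<in> W"
    "\<And>f' B. f' \<in> W \<Longrightarrow> B \<in> ?\<B> \<Longrightarrow> f' \<in> B \<longleftrightarrow> f \<in> B"
    using open_nbhd_deciding_clopens[OF _ _ assms(3)] by blast
  have "profile_op Q f' Ss = profile_op Q f Ss" if "f' \<in> W" "length Ss = n" for f' Ss
    unfolding profile_op_def
  proof (rule Collect_cong)
    fix r
    have "f' \<in> B \<longleftrightarrow> f \<in> B" if "PApp B ps \<in> Q" "list_all2 (\<in>) ps Ss" for B ps
      using W(3)[OF \<open>f' \<in> W\<close>, of B] that \<open>length Ss = n\<close> by (auto dest: list_all2_lengthD)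
    then show "(r \<in> Q \<and> (\<exists>B ps. r = PApp B ps \<and> f' \<in> B \<and> list_all2 (\<in>) ps Ss)) \<longleftrightarrow>
        (r \<in> Q \<and> (\<exists>B ps. r = PApp B ps \<and> f \<in> B \<and> list_all2 (\<in>) ps Ss))"
      by blast
  qed
  with W(1,2) show ?thesis
    by blast
qed

lemma profile_alg_encoding:
  assumes "finite Q" "\<And>r. r \<in> Q \<Longrightarrow> open_pat Om TX r \<and> closed_pat Om TX r"
    and "\<And>B ps p. PApp B ps \<in> Q \<Longrightarrow> p \<in> set ps \<Longrightarrow> p \<in> Q" "inj_on e (Pow Q)"
  shows "finite_discrete_alg Om (e ` Pow Q) (encode_op (Pow Q) e (profile_op Q))"
    and "cont_hom Om (trm_topology Om TX) App (discrete_topology (e ` Pow Q))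
      (encode_op (Pow Q) e (profile_op Q)) (e \<circ> profile Q)"
proof -
  show "finite_discrete_alg Om (e ` Pow Q) (encode_op (Pow Q) e (profile_op Q))"
    using finite_Pow_iff[THEN iffD2, OF assms(1)] assms(4)
  proof (rule finite_discrete_alg_encoding)
    show "profile_op Q f Ss \<in> Pow Q" for f Ss
      by (auto simp: profile_op_def)
    show "\<exists>W. openin (Om n) W \<and> f \<in> W \<and>
        (\<forall>f'\<in>W. \<forall>Ss. length Ss = n \<longrightarrow> profile_op Q f' Ss = profile_op Q f Ss)"
      if "f \<in> topspace (Om n)" for n f
      by (rule profile_op_locally_constant[OF assms(1,2) that])
  qed
  have "profile Q (App f ts) = profile_op Q f (map (profile Q) ts)" for f ts
    using assms(3) by (rule profile_App)
  then have "is_hom Om (trm_topology Om TX) App (profile_op Q) (profile Q)"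
    unfolding is_hom_def by blast
  moreover have "continuous_map (trm_topology Om TX) (discrete_topology (Pow Q)) (profile Q)"
    using assms(1,2) by (rule continuous_map_profile)
  ultimately show "cont_hom Om (trm_topology Om TX) App (discrete_topology (e ` Pow Q))
      (encode_op (Pow Q) e (profile_op Q)) (e \<circ> profile Q)"
    using assms(4) by (intro cont_hom_encoding)
qed

lemma inj_on_into_infinite:
  assumes "finite A" "infinite (UNIV :: 'c set)"
  obtains e :: "'a \<Rightarrow> 'c" where "inj_on e A"
proof -
  obtain C :: "'c set" where "finite C" "card C = card A"
    using infinite_arbitrarily_large[OF assms(2)] by blast
  with assms(1) show ?thesis
    using card_le_inj[of A C] that by auto
qed

lemma finite_alg_fibre_within_open:
  fixes Om :: "nat \<Rightarrow> 'o topology" and TX :: "'x topology"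
  assumes "zero_dimensional TX" "\<And>n. zero_dimensional (Om n)" "infinite (UNIV :: 'c set)"
    and "openin (trm_topology Om TX) U" "t \<in> U"
  obtains B :: "'c set" and opB \<phi> where "finite_discrete_alg Om B opB"
    "cont_hom Om (trm_topology Om TX) App (discrete_topology B) opB \<phi>"
    "\<And>s. s \<in> trms Om TX \<Longrightarrow> \<phi> s = \<phi> t \<Longrightarrow> s \<in> U"
proof -
  obtain p where p: "open_pat Om TX p" "matches p t" "{s \<in> trms Om TX. matches p s} \<subseteq> U"
    and t: "t \<in> trms Om TX"
    using assms(4,5) unfolding openin_trm_topology by blast
  obtain q where q: "open_pat Om TX q" "closed_pat Om TX q" "matches q t"
    "\<forall>s. matches q s \<longrightarrow> matches p s"
    using clopen_pat_refinement[OF assms(1,2) t p(1,2)] by blast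
  define Q where "Q = subpats q"
  have Q: "finite Q" "\<And>r. r \<in> Q \<Longrightarrow> open_pat Om TX r \<and> closed_pat Om TX r"
    "\<And>B ps p. PApp B ps \<in> Q \<Longrightarrow> p \<in> set ps \<Longrightarrow> p \<in> Q" "q \<in> Q"
    unfolding Q_def
    using q(1,2) finite_subpats open_pat_subpats closed_pat_subpats subpats_child_closed self_in_subpats
    by blast+
  obtain e :: "('x, 'o) pat set \<Rightarrow> 'c" where e: "inj_on e (Pow Q)"
    using inj_on_into_infinite[OF finite_Pow_iff[THEN iffD2, OF Q(1)] assms(3)] by blast
  have "s \<in> U" if s: "s \<in> trms Om TX" "(e \<circ> profile Q) s = (e \<circ> profile Q) t" for s
  proof -
    have "profile Q s = profile Q t"
      using s(2) e unfolding inj_on_def profile_def by auto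
    moreover have "q \<in> profile Q t"
      using q(3) Q(4) unfolding profile_def by blast
    ultimately have "matches q s"
      unfolding profile_def by blast
    then show ?thesis
      using q(4) p(3) s(1) by blast
  qed
  with profile_alg_encoding[OF Q(1-3) e] show thesis
    by (rule that)
qed

lemma residually_finite_trm_topology:
  assumes "zero_dimensional TX" "\<And>n. zero_dimensional (Om n)"
  shows "residually_finite Om (trm_topology Om TX) App"
  unfolding residually_finite_def
proof (intro ballI impI)
  fix a b assume ab: "a \<in> topspace (trm_topology Om TX)" "b \<in> topspace (trm_topology Om TX)" "a \<noteq> b"
  have "t1_space (trm_topology Om TX)"
    using assms by (intro t1_space_trm_topology zero_dimensional_imp_t1_space)
  then obtain U where U: "openin (trm_topology Om TX) U" "a \<in> U" "b \<notin> U"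
    using ab unfolding t1_space_def by blast
  obtain B :: "nat set" and opB \<phi> where "finite_discrete_alg Om B opB"
    "cont_hom Om (trm_topology Om TX) App (discrete_topology B) opB \<phi>"
    "\<And>s. s \<in> trms Om TX \<Longrightarrow> \<phi> s = \<phi> a \<Longrightarrow> s \<in> U"
    using finite_alg_fibre_within_open[OF assms infinite_UNIV_nat U(1,2)] by blast
  moreover have "\<phi> a \<noteq> \<phi> b"
    using ab(2) U(3) calculation(3) by auto
  ultimately show "\<exists>(B :: nat set) opB h. finite_discrete_alg Om B opB \<and>
      cont_hom Om (trm_topology Om TX) App (discrete_topology B) opB h \<and> h a \<noteq> h b"
    by blast
qed

lemma topalg_op_in_topspace:
  assumes "topalg Om TA opA" "f \<in> topspace (Om (length as))" "set as \<subseteq> topspace TA"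
  shows "opA f as \<in> topspace TA"
proof -
  let ?n = "length as"
  let ?g = "restrict (\<lambda>i. as!i) {..<?n}"
  have "continuous_map (prod_topology (Om ?n) (product_topology (\<lambda>_. TA) {..<?n})) TA
      (\<lambda>(f, g). opA f (map g [0..<?n]))"
    using assms(1) unfolding topalg_def by blast
  moreover have "(f, ?g) \<in> topspace (prod_topology (Om ?n) (product_topology (\<lambda>_. TA) {..<?n}))"
    using assms(2,3) by (auto simp: PiE_iff)
  ultimately have "(\<lambda>(f, g). opA f (map g [0..<?n])) (f, ?g) \<in> topspace TA"
    by (rule subsetD[OF continuous_map_image_subset_topspace imageI])
  then have "opA f (map ?g [0..<?n]) \<in> topspace TA"
    by simp
  moreover have "map ?g [0..<?n] = as"
    by (auto intro: nth_equalityI)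
  ultimately show ?thesis
    by simp
qed

lemma topalg_op_nbhd:
  assumes "topalg Om TA opA" "f \<in> topspace (Om n)" "length as = n" "set as \<subseteq> topspace TA"
    and "openin TA V" "opA f as \<in> V"
  obtains W Vs where "openin (Om n) W" "f \<in> W" "length Vs = n"
    "\<And>i. i < n \<Longrightarrow> openin TA (Vs!i) \<and> as!i \<in> Vs!i"
    "\<And>f' bs. f' \<in> W \<Longrightarrow> length bs = n \<Longrightarrow> (\<And>i. i < n \<Longrightarrow> bs!i \<in> Vs!i) \<Longrightarrow> opA f' bs \<in> V"
proof -
  let ?P = "prod_topology (Om n) (product_topology (\<lambda>_. TA) {..<n})"
  let ?F = "\<lambda>(f, g). opA f (map g [0..<n])"
  let ?g = "restrict (\<lambda>i. as!i) {..<n}"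
  have "openin ?P {x \<in> topspace ?P. ?F x \<in> V}"
    using assms(1,5) unfolding topalg_def continuous_map by blast
  moreover have "map ?g [0..<n] = as"
    using assms(3) by (auto intro: nth_equalityI)
  then have "(f, ?g) \<in> {x \<in> topspace ?P. ?F x \<in> V}"
    using assms(2-4,6) by (auto simp: PiE_iff)
  ultimately have "\<exists>W G. openin (Om n) W \<and> openin (product_topology (\<lambda>_. TA) {..<n}) G \<and>
      f \<in> W \<and> ?g \<in> G \<and> W \<times> G \<subseteq> {x \<in> topspace ?P. ?F x \<in> V}"
    by (rule openin_prod_topology_alt[THEN iffD1, rule_format])
  then obtain W G where WG: "openin (Om n) W" "openin (product_topology (\<lambda>_. TA) {..<n}) G"
    "f \<in> W" "?g \<in> G" "W \<times> G \<subseteq> {x \<in> topspace ?P. ?F x \<in> V}"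
    by blast
  obtain Us where Us: "finite {i \<in> {..<n}. Us i \<noteq> topspace TA} \<and> (\<forall>i\<in>{..<n}. openin TA (Us i)) \<and>
      ?g \<in> PiE {..<n} Us \<and> PiE {..<n} Us \<subseteq> G"
    using openin_product_topology_alt[THEN iffD1, rule_format, OF WG(2,4)] ..
  show thesis
  proof
    show "openin (Om n) W" "f \<in> W" "length (map Us [0..<n]) = n"
      using WG by simp_all
    show "openin TA (map Us [0..<n] ! i) \<and> as!i \<in> map Us [0..<n] ! i" if "i < n" for i
      using that Us by (auto simp: PiE_iff)
    fix f' bs
    assume f': "f' \<in> W" and bs: "length bs = n" "\<And>i. i < n \<Longrightarrow> bs!i \<in> map Us [0..<n] ! i"
    let ?g' = "restrict (\<lambda>i. bs!i) {..<n}"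
    have "?g' \<in> PiE {..<n} Us"
      using bs by (simp add: restrict_PiE_iff)
    then have "?g' \<in> G"
      using Us by blast
    with f' WG(5) have "?F (f', ?g') \<in> V"
      by blast
    moreover have "map ?g' [0..<n] = bs"
      using bs(1) by (auto intro: nth_equalityI)
    ultimately show "opA f' bs \<in> V"
      by simp
  qed
qed

lemma is_hom_App:
  "is_hom Om (trm_topology Om TX) App opF h \<Longrightarrow> App f ts \<in> trms Om TX \<Longrightarrow>
    h (App f ts) = opF f (map h ts)"
  unfolding is_hom_def by (simp add: subset_iff)

lemma trm_hom_in_topspace:
  assumes "topalg Om TF opF" "is_hom Om (trm_topology Om TX) App opF h"
    and "\<And>x. x \<in> topspace TX \<Longrightarrow> h (Var x) \<in> topspace TF"
  shows "t \<in> trms Om TX \<Longrightarrow> h t \<in> topspace TF"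
proof (induction t rule: trms.induct)
  case (trms_Var x)
  then show ?case
    using assms(3) by blast
next
  case (trms_App f ts)
  then have "opF f (map h ts) \<in> topspace TF"
    by (intro topalg_op_in_topspace[OF assms(1)]) auto
  with trms_App show ?case
    by (simp add: is_hom_App[OF assms(2)])
qed

lemma trm_hom_nbhd_App:
  assumes "topalg Om TF opF" "is_hom Om (trm_topology Om TX) App opF h"
    and "\<And>s. s \<in> trms Om TX \<Longrightarrow> h s \<in> topspace TF" "App f ts \<in> trms Om TX"
    and "openin TF V" "h (App f ts) \<in> V"
    and children: "\<And>i V. i < length ts \<Longrightarrow> openin TF V \<Longrightarrow> h (ts!i) \<in> V \<Longrightarrow>
      \<exists>p. open_pat Om TX p \<and> matches p (ts!i) \<and> (\<forall>s\<in>trms Om TX. matches p s \<longrightarrow> h s \<in> V)"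
  shows "\<exists>p. open_pat Om TX p \<and> matches p (App f ts) \<and> (\<forall>s\<in>trms Om TX. matches p s \<longrightarrow> h s \<in> V)"
proof -
  let ?n = "length ts"
  have "f \<in> topspace (Om ?n)" "set (map h ts) \<subseteq> topspace TF"
    using assms(3,4) by auto
  moreover have "opF f (map h ts) \<in> V"
    using assms(6) is_hom_App[OF assms(2,4)] by simp
  ultimately obtain W Vs where W: "openin (Om ?n) W" "f \<in> W" "length Vs = ?n"
    "\<And>i. i < ?n \<Longrightarrow> openin TF (Vs!i) \<and> map h ts ! i \<in> Vs!i"
    "\<And>f' bs. f' \<in> W \<Longrightarrow> length bs = ?n \<Longrightarrow> (\<And>i. i < ?n \<Longrightarrow> bs!i \<in> Vs!i) \<Longrightarrow> opF f' bs \<in> V"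
    by (rule topalg_op_nbhd[OF assms(1) _ length_map _ assms(5)]) blast
  have "\<forall>i<?n. \<exists>p. open_pat Om TX p \<and> matches p (ts!i) \<and> (\<forall>s\<in>trms Om TX. matches p s \<longrightarrow> h s \<in> Vs!i)"
    using W(4) by (auto intro!: children)
  then obtain ps where ps: "length ps = ?n"
    "\<forall>i<?n. open_pat Om TX (ps!i) \<and> matches (ps!i) (ts!i) \<and>
       (\<forall>s\<in>trms Om TX. matches (ps!i) s \<longrightarrow> h s \<in> Vs!i)"
    unfolding Skolem_list_nth by blast
  have "h s \<in> V" if s: "s \<in> trms Om TX" "matches (PApp W ps) s" for s
  proof -
    obtain g ss where g: "s = App g ss" "g \<in> W" "list_all2 matches ps ss"
      using s(2) by (auto simp: matches_PApp_iff)
    have ss: "length ss = ?n"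
      using g(3) ps(1) by (simp add: list_all2_lengthD[symmetric])
    have "h (ss!i) \<in> Vs!i" if "i < ?n" for i
      using that ss g(1,3) ps(2) s(1) by (simp add: list_all2_conv_all_nth)
    then have "opF g (map h ss) \<in> V"
      using W(5)[OF g(2)] ss by simp
    then show ?thesis
      using is_hom_App[OF assms(2)] s(1) g(1) by simp
  qed
  moreover have "open_pat Om TX (PApp W ps)" "matches (PApp W ps) (App f ts)"
    using W ps by (auto simp: in_set_conv_nth list_all2_conv_all_nth)
  ultimately show ?thesis
    by blast
qed

lemma trm_hom_nbhd:
  assumes "topalg Om TF opF" "is_hom Om (trm_topology Om TX) App opF h"
    and "continuous_map TX TF (h \<circ> Var)" "\<And>s. s \<in> trms Om TX \<Longrightarrow> h s \<in> topspace TF"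
  shows "t \<in> trms Om TX \<Longrightarrow> openin TF V \<Longrightarrow> h t \<in> V \<Longrightarrow>
    \<exists>p. open_pat Om TX p \<and> matches p t \<and> (\<forall>s\<in>trms Om TX. matches p s \<longrightarrow> h s \<in> V)"
proof (induction t arbitrary: V rule: trms.induct)
  case (trms_Var x)
  let ?A = "{y \<in> topspace TX. h (Var y) \<in> V}"
  have "open_pat Om TX (PVar ?A)"
    using openin_continuous_map_preimage[OF assms(3) trms_Var.prems(1)] by simp
  moreover have "matches (PVar ?A) (Var x)"
    using trms_Var by simp
  moreover have "h s \<in> V" if "matches (PVar ?A) s" for s
    using that by (auto simp: matches_PVar_iff)
  ultimately show ?case
    by blast
next
  case (trms_App f ts)
  show ?case
    by (rule trm_hom_nbhd_App[OF assms(1,2,4) _ trms_App.prems]) (use trms_App in \<open>auto dest: nth_mem\<close>)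
qed

lemma continuous_map_trm_hom:
  assumes "topalg Om TF opF" "is_hom Om (trm_topology Om TX) App opF h"
    and "continuous_map TX TF (h \<circ> Var)"
  shows "continuous_map (trm_topology Om TX) TF h"
  unfolding continuous_map
proof (intro conjI allI impI)
  have "h (Var x) \<in> topspace TF" if "x \<in> topspace TX" for x
    using that continuous_map_image_subset_topspace[OF assms(3)] by (simp add: image_subset_iff)
  then have in_topspace: "h s \<in> topspace TF" if "s \<in> trms Om TX" for s
    using trm_hom_in_topspace[OF assms(1,2)] that by blast
  then show "h ` topspace (trm_topology Om TX) \<subseteq> topspace TF"
    by auto
  fix V assume "openin TF V"
  then show "openin (trm_topology Om TX) {t \<in> topspace (trm_topology Om TX). h t \<in> V}"
    unfolding openin_trm_topology using trm_hom_nbhd[OF assms in_topspace] by fastforce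
qed

primrec eval_trm :: "('x \<Rightarrow> 'f) \<Rightarrow> ('o \<Rightarrow> 'f list \<Rightarrow> 'f) \<Rightarrow> ('x, 'o) trm \<Rightarrow> 'f" where
  "eval_trm \<iota> opF (Var x) = \<iota> x"
| "eval_trm \<iota> opF (App f ts) = opF f (map (eval_trm \<iota> opF) ts)"

lemma cont_hom_eval_trm:
  assumes "topalg Om TF opF" "continuous_map TX TF \<iota>"
  shows "cont_hom Om (trm_topology Om TX) App TF opF (eval_trm \<iota> opF)"
proof -
  have hom: "is_hom Om (trm_topology Om TX) App opF (eval_trm \<iota> opF)"
    unfolding is_hom_def by simp
  moreover have "continuous_map TX TF (eval_trm \<iota> opF \<circ> Var)"
    using assms(2) by (simp add: comp_def)
  ultimately show ?thesis
    unfolding cont_hom_def using assms(1) continuous_map_trm_hom by blast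
qed

lemma trm_hom_unique:
  assumes "is_hom Om (trm_topology Om TX) App opB h" "is_hom Om (trm_topology Om TX) App opB h'"
    and "\<And>x. x \<in> topspace TX \<Longrightarrow> h (Var x) = h' (Var x)"
  shows "t \<in> trms Om TX \<Longrightarrow> h t = h' t"
proof (induction t rule: trms.induct)
  case (trms_Var x)
  then show ?case
    using assms(3) by blast
next
  case (trms_App f ts)
  then have "App f ts \<in> trms Om TX" "map h ts = map h' ts"
    by auto
  then show ?case
    using is_hom_App[OF assms(1)] is_hom_App[OF assms(2)] by metis
qed

lemma trm_hom_image:
  assumes "is_hom Om (trm_topology Om TX) App opF h" "\<And>x. x \<in> topspace TX \<Longrightarrow> h (Var x) = \<iota> x"
  shows "h ` trms Om TX = gen_sub Om opF (\<iota> ` topspace TX)"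
proof
  have "h t \<in> gen_sub Om opF (\<iota> ` topspace TX)" if "t \<in> trms Om TX" for t
    using that
  proof (induction t rule: trms.induct)
    case (trms_Var x)
    then show ?case
      using assms(2) by (auto intro: gen_sub.gen_base)
  next
    case (trms_App f ts)
    then show ?case
      by (auto simp: is_hom_App[OF assms(1)] intro!: gen_sub.gen_op)
  qed
  then show "h ` trms Om TX \<subseteq> gen_sub Om opF (\<iota> ` topspace TX)"
    by blast
  show "gen_sub Om opF (\<iota> ` topspace TX) \<subseteq> h ` trms Om TX"
  proof
    fix y assume "y \<in> gen_sub Om opF (\<iota> ` topspace TX)"
    then show "y \<in> h ` trms Om TX"
    proof (induction y rule: gen_sub.induct)
      case (gen_base y)
      then show ?case
        using assms(2) by (auto intro!: image_eqI[of _ _ "Var _"])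
    next
      case (gen_op f as)
      then have "\<forall>i<length as. \<exists>t. t \<in> trms Om TX \<and> h t = as!i"
        by (metis imageE nth_mem)
      then obtain ts where ts: "length ts = length as" "\<forall>i<length as. ts!i \<in> trms Om TX \<and> h (ts!i) = as!i"
        unfolding Skolem_list_nth by blast
      then have "map h ts = as" "App f ts \<in> trms Om TX"
        using gen_op(1) by (auto simp: in_set_conv_nth intro: nth_equalityI)
      then have "opF f as = h (App f ts)"
        using is_hom_App[OF assms(1)] by simp
      with \<open>App f ts \<in> trms Om TX\<close> show ?case
        by blast
    qed
  qed
qed

lemma continuous_map_Var: "continuous_map TX (trm_topology Om TX) Var"
  unfolding continuous_map
proof (intro conjI allI impI)
  show "Var ` topspace TX \<subseteq> topspace (trm_topology Om TX)"
    by auto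
  fix U assume U: "openin (trm_topology Om TX) U"
  show "openin TX {x \<in> topspace TX. Var x \<in> U}"
  proof (subst openin_subopen, intro ballI)
    fix x assume x: "x \<in> {x \<in> topspace TX. Var x \<in> U}"
    then obtain p where p: "open_pat Om TX p" "matches p (Var x)" "{s \<in> trms Om TX. matches p s} \<subseteq> U"
      using U unfolding openin_trm_topology by blast
    then obtain A where A: "p = PVar A" "openin TX A" "x \<in> A"
      by (cases p) auto
    have "A \<subseteq> {x \<in> topspace TX. Var x \<in> U}"
    proof
      fix y assume y: "y \<in> A"
      then have "y \<in> topspace TX"
        using openin_subset[OF A(2)] by blast
      with y A(1) p(3) show "y \<in> {x \<in> topspace TX. Var x \<in> U}"
        by auto
    qed
    with A show "\<exists>T. openin TX T \<and> x \<in> T \<and> T \<subseteq> {x \<in> topspace TX. Var x \<in> U}"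
      by blast
  qed
qed

lemma is_hom_comp:
  assumes "is_hom Om TA opA opB h" "h ` topspace TA \<subseteq> topspace TB" "is_hom Om TB opB opC k"
  shows "is_hom Om TA opA opC (k \<circ> h)"
  unfolding is_hom_def
proof (intro allI impI)
  fix n f as assume as: "f \<in> topspace (Om n) \<and> length as = n \<and> set as \<subseteq> topspace TA"
  then have "h (opA f as) = opB f (map h as)"
    using assms(1) unfolding is_hom_def by blast
  moreover have "set (map h as) \<subseteq> topspace TB"
    using as assms(2) by auto
  ultimately show "(k \<circ> h) (opA f as) = opC f (map (k \<circ> h) as)"
    using as assms(3) unfolding is_hom_def by simp
qed

lemma finite_discrete_alg_imp_stone_alg:
  assumes "finite_discrete_alg Om A op"
  shows "stone_alg Om (discrete_topology A) op"
  unfolding stone_alg_def zero_dimensional_def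
proof (intro conjI allI impI)
  show "topalg Om (discrete_topology A) op" "compact_space (discrete_topology A)"
    using assms unfolding finite_discrete_alg_def by (auto simp: compact_space_discrete_topology)
  show "Hausdorff_space (discrete_topology A)" "t1_space (discrete_topology A)"
    by (simp_all add: Hausdorff_imp_t1_space)
  fix U x assume "openin (discrete_topology A) U \<and> x \<in> U"
  then show "\<exists>C. openin (discrete_topology A) C \<and> closedin (discrete_topology A) C \<and> x \<in> C \<and> C \<subseteq> U"
    by (intro exI[of _ "{x}"]) auto
qed

lemma free_stone_alg_factor:
  fixes B :: "'u set"
  assumes "free_stone_alg_wrt TYPE('u) Om TX TF opF \<iota>"
    and "cont_hom Om (trm_topology Om TX) App TF opF h" "\<And>x. x \<in> topspace TX \<Longrightarrow> h (Var x) = \<iota> x"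
    and "finite_discrete_alg Om B opB" "cont_hom Om (trm_topology Om TX) App (discrete_topology B) opB \<phi>"
  obtains \<psi> where "continuous_map TF (discrete_topology B) \<psi>" "\<And>s. s \<in> trms Om TX \<Longrightarrow> \<psi> (h s) = \<phi> s"
proof -
  have "continuous_map TX (discrete_topology B) (\<phi> \<circ> Var)"
    by (rule continuous_map_compose[OF continuous_map_Var[of TX Om]])
       (use assms(5) in \<open>simp add: cont_hom_def\<close>)
  moreover have "stone_alg Om (discrete_topology B) opB"
    using assms(4) by (rule finite_discrete_alg_imp_stone_alg)
  moreover have "\<forall>(TT :: 'u topology) opT \<phi>. stone_alg Om TT opT \<and> continuous_map TX TT \<phi> \<longrightarrow>
      (\<exists>h. cont_hom Om TF opF TT opT h \<and> (\<forall>x\<in>topspace TX. h (\<iota> x) = \<phi> x) \<and>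
        (\<forall>h'. cont_hom Om TF opF TT opT h' \<and> (\<forall>x\<in>topspace TX. h' (\<iota> x) = \<phi> x) \<longrightarrow>
          (\<forall>y\<in>topspace TF. h' y = h y)))"
    using assms(1) unfolding free_stone_alg_wrt_def by blast
  ultimately obtain \<psi> where \<psi>: "cont_hom Om TF opF (discrete_topology B) opB \<psi>"
    "\<forall>x\<in>topspace TX. \<psi> (\<iota> x) = (\<phi> \<circ> Var) x"
    by blast
  have "is_hom Om (trm_topology Om TX) App opB (\<psi> \<circ> h)"
  proof (rule is_hom_comp)
    show "is_hom Om (trm_topology Om TX) App opF h" "h ` topspace (trm_topology Om TX) \<subseteq> topspace TF"
      using assms(2) continuous_map_image_subset_topspace unfolding cont_hom_def by blast+
    show "is_hom Om TF opF opB \<psi>"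
      using \<psi>(1) unfolding cont_hom_def by blast
  qed
  moreover have "is_hom Om (trm_topology Om TX) App opB \<phi>"
    using assms(5) unfolding cont_hom_def by blast
  moreover have "(\<psi> \<circ> h) (Var x) = \<phi> (Var x)" if "x \<in> topspace TX" for x
    using that assms(3) \<psi>(2) by simp
  ultimately have "(\<psi> \<circ> h) s = \<phi> s" if "s \<in> trms Om TX" for s
    using that by (rule trm_hom_unique)
  moreover have "continuous_map TF (discrete_topology B) \<psi>"
    using \<psi>(1) unfolding cont_hom_def by blast
  ultimately show thesis
    using that by simp
qed

lemma initial_map_imp_embedding_map:
  assumes "continuous_map X Y h" "t1_space X"
    and "\<And>U x. openin X U \<Longrightarrow> x \<in> U \<Longrightarrow> \<exists>V. openin Y V \<and> h x \<in> V \<and> {s \<in> topspace X. h s \<in> V} \<subseteq> U"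
  shows "inj_on h (topspace X)" "embedding_map X Y h"
proof -
  show inj: "inj_on h (topspace X)"
  proof (rule inj_onI, rule ccontr)
    fix a b assume ab: "a \<in> topspace X" "b \<in> topspace X" "h a = h b" "a \<noteq> b"
    then obtain U where "openin X U" "a \<in> U" "b \<notin> U"
      using assms(2) unfolding t1_space_def by blast
    with assms(3) obtain V where "h a \<in> V" "{s \<in> topspace X. h s \<in> V} \<subseteq> U"
      by blast
    with ab \<open>b \<notin> U\<close> show False
      by auto
  qed
  let ?S = "h ` topspace X"
  have "open_map X (subtopology Y ?S) h"
    unfolding open_map_def
  proof (intro allI impI)
    fix U assume U: "openin X U"
    show "openin (subtopology Y ?S) (h ` U)"
    proof (subst openin_subopen, intro ballI)
      fix y assume "y \<in> h ` U"
      then obtain x where x: "x \<in> U" "y = h x"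
        by blast
      then obtain V where V: "openin Y V" "h x \<in> V" "{s \<in> topspace X. h s \<in> V} \<subseteq> U"
        using assms(3) U by blast
      have "openin (subtopology Y ?S) (V \<inter> ?S)"
        using V(1) by (auto simp: openin_subtopology)
      moreover have "V \<inter> ?S \<subseteq> h ` U"
        using V(3) by blast
      ultimately show "\<exists>T. openin (subtopology Y ?S) T \<and> y \<in> T \<and> T \<subseteq> h ` U"
        using V(2) x openin_subset[OF U] by blast
    qed
  qed
  moreover have "topspace (subtopology Y ?S) = ?S"
    using continuous_map_image_subset_topspace[OF assms(1)] by auto
  ultimately show "embedding_map X Y h"
    unfolding embedding_map_def
    using assms(1) inj by (intro bijective_open_imp_homeomorphic_map) (auto simp: continuous_map_in_subtopology)
qed

lemma trm_hom_embedding_map: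
  assumes "zero_dimensional TX" "\<And>n. zero_dimensional (Om n)" "infinite (UNIV :: 'u set)"
    and "free_stone_alg_wrt TYPE('u) Om TX TF opF \<iota>"
    and "cont_hom Om (trm_topology Om TX) App TF opF h" "\<And>x. x \<in> topspace TX \<Longrightarrow> h (Var x) = \<iota> x"
  shows "inj_on h (trms Om TX)" "embedding_map (trm_topology Om TX) TF h"
proof -
  have h: "continuous_map (trm_topology Om TX) TF h"
    using assms(5) unfolding cont_hom_def by blast
  have "\<exists>V. openin TF V \<and> h t \<in> V \<and> {s \<in> trms Om TX. h s \<in> V} \<subseteq> U"
    if U: "openin (trm_topology Om TX) U" "t \<in> U" for U t
  proof -
    obtain B :: "'u set" and opB \<phi> where \<phi>: "finite_discrete_alg Om B opB"
      "cont_hom Om (trm_topology Om TX) App (discrete_topology B) opB \<phi>"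
      "\<And>s. s \<in> trms Om TX \<Longrightarrow> \<phi> s = \<phi> t \<Longrightarrow> s \<in> U"
      using finite_alg_fibre_within_open[OF assms(1-3) U] by blast
    obtain \<psi> where \<psi>: "continuous_map TF (discrete_topology B) \<psi>"
      "\<And>s. s \<in> trms Om TX \<Longrightarrow> \<psi> (h s) = \<phi> s"
      using free_stone_alg_factor[OF assms(4-6) \<phi>(1,2)] by blast
    have t: "t \<in> trms Om TX"
      using U openin_subset by fastforce
    then have "\<phi> t \<in> B"
      using \<phi>(2) continuous_map_image_subset_topspace unfolding cont_hom_def by fastforce
    then have "openin TF {y \<in> topspace TF. \<psi> y \<in> {\<phi> t}}"
      by (intro openin_continuous_map_preimage[OF \<psi>(1)]) simp
    moreover have "h t \<in> {y \<in> topspace TF. \<psi> y \<in> {\<phi> t}}"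
      using t \<psi>(2) continuous_map_image_subset_topspace[OF h] by auto
    moreover have "{s \<in> trms Om TX. h s \<in> {y \<in> topspace TF. \<psi> y \<in> {\<phi> t}}} \<subseteq> U"
      using \<phi>(3) \<psi>(2) by auto
    ultimately show ?thesis
      by blast
  qed
  moreover have "t1_space (trm_topology Om TX)"
    using assms(1,2) by (intro t1_space_trm_topology zero_dimensional_imp_t1_space)
  ultimately show "inj_on h (trms Om TX)" "embedding_map (trm_topology Om TX) TF h"
    using initial_map_imp_embedding_map[OF h] by auto
qed

theorem proposition4p7:
  fixes Om :: "nat \<Rightarrow> 'o topology" and TX :: "'x topology"
    and TF :: "'f topology" and opF :: "'o \<Rightarrow> 'f list \<Rightarrow> 'f" and \<iota> :: "'x \<Rightarrow> 'f"
  assumes "zero_dimensional TX"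
    and "\<And>n. zero_dimensional (Om n)"
    and "infinite (UNIV :: 'u set)"
    and "free_stone_alg_wrt TYPE('u) Om TX TF opF \<iota>"
  shows "residually_finite Om (trm_topology Om TX) App \<and>
    (\<exists>h. cont_hom Om (trm_topology Om TX) App TF opF h \<and> (\<forall>x\<in>topspace TX. h (Var x) = \<iota> x)) \<and>
    (\<forall>h h'. cont_hom Om (trm_topology Om TX) App TF opF h \<and> (\<forall>x\<in>topspace TX. h (Var x) = \<iota> x)
       \<and> cont_hom Om (trm_topology Om TX) App TF opF h' \<and> (\<forall>x\<in>topspace TX. h' (Var x) = \<iota> x)
       \<longrightarrow> (\<forall>t\<in>topspace (trm_topology Om TX). h t = h' t)) \<and>
    (\<forall>h. cont_hom Om (trm_topology Om TX) App TF opF h \<and> (\<forall>x\<in>topspace TX. h (Var x) = \<iota> x)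
       \<longrightarrow> inj_on h (topspace (trm_topology Om TX)) \<and>
           h ` topspace (trm_topology Om TX) = gen_sub Om opF (\<iota> ` topspace TX) \<and>
           homeomorphic_map (trm_topology Om TX)
              (subtopology TF (gen_sub Om opF (\<iota> ` topspace TX))) h)"
proof (intro conjI allI impI)
  show "residually_finite Om (trm_topology Om TX) App"
    using assms(1,2) by (rule residually_finite_trm_topology)
  have "topalg Om TF opF" "continuous_map TX TF \<iota>"
    using assms(4) unfolding free_stone_alg_wrt_def stone_alg_def by blast+
  then show "\<exists>h. cont_hom Om (trm_topology Om TX) App TF opF h \<and> (\<forall>x\<in>topspace TX. h (Var x) = \<iota> x)"
    using cont_hom_eval_trm by fastforce
next
  fix h h'
  assume "cont_hom Om (trm_topology Om TX) App TF opF h \<and> (\<forall>x\<in>topspace TX. h (Var x) = \<iota> x)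
       \<and> cont_hom Om (trm_topology Om TX) App TF opF h' \<and> (\<forall>x\<in>topspace TX. h' (Var x) = \<iota> x)"
  then show "\<forall>t\<in>topspace (trm_topology Om TX). h t = h' t"
    unfolding cont_hom_def using trm_hom_unique[of Om TX opF h h'] by simp
next
  fix h
  assume h: "cont_hom Om (trm_topology Om TX) App TF opF h \<and> (\<forall>x\<in>topspace TX. h (Var x) = \<iota> x)"
  then have image: "h ` topspace (trm_topology Om TX) = gen_sub Om opF (\<iota> ` topspace TX)"
    unfolding cont_hom_def using trm_hom_image[of Om TX opF h \<iota>] by simp
  show "h ` topspace (trm_topology Om TX) = gen_sub Om opF (\<iota> ` topspace TX)"
    by (fact image)
  have "inj_on h (trms Om TX)" "embedding_map (trm_topology Om TX) TF h"
    using trm_hom_embedding_map[OF assms conjunct1[OF h] conjunct2[OF h, rule_format]] by blast+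
  with image show "inj_on h (topspace (trm_topology Om TX))"
    "homeomorphic_map (trm_topology Om TX) (subtopology TF (gen_sub Om opF (\<iota> ` topspace TX))) h"
    unfolding embedding_map_def by simp_all
qed

end
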